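(* Let $n\ge 3$ and let $T_{W_n}(x,y)$ be the Tutte polynomial of the wheel graph $W_n$. Then $$1+T_{W_n}(1,x)=\sum_{k\ge0}a_{k,n}x^k,$$ where $a_{k,n}$ is the number of subgraphs of the cycle graph $C_n$ with exactly $k$ edges (a subgraph being a pair $(A,E_A)$ with $A\subseteq[n]$ non-empty and $E_A$ a set of edges of $C_n$ with both endpoints in $A$).
   Context: $C_n$ is the cycle graph on $[n]=\{1,\ldots,n\}$ with edges $\{i,i+1\}$ ($1\le i<n$) and $\{n,1\}$; $W_n$ is obtained from $C_n$ by adding a vertex $0$ adjacent to all vertices of $[n]$. $T_G(x,y)$ is the standard bivariate Tutte polynomial. *)

theory Defs
  imports Main
begin

text \<open>Graphs: a finite vertex set V and a set of edges, each edge a 2-element set of vertices.\<close>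

definition edge_rel :: "'v set set \<Rightarrow> 'v rel" where
  "edge_rel A = {(u, v). {u, v} \<in> A}"

definition num_components :: "'v set \<Rightarrow> 'v set set \<Rightarrow> nat" where
  "num_components V A = card ((\<lambda>v. ((edge_rel A)\<^sup>*) `` {v} \<inter> V) ` V)"

definition graph_rank :: "'v set \<Rightarrow> 'v set set \<Rightarrow> nat" where
  "graph_rank V A = card V - num_components V A"

definition tutte :: "'v set \<Rightarrow> 'v set set \<Rightarrow> 'a::comm_ring_1 \<Rightarrow> 'a \<Rightarrow> 'a" where
  "tutte V E x y = (\<Sum>A\<in>Pow E. (x - 1) ^ (graph_rank V E - graph_rank V A)
                                * (y - 1) ^ (card A - graph_rank V A))"

definition cycle_edges :: "nat \<Rightarrow> nat set set" where
  "cycle_edges n = {{i, i + 1} | i. 1 \<le> i \<and> i < n} \<union> {{n, 1}}"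

definition wheel_vertices :: "nat \<Rightarrow> nat set" where
  "wheel_vertices n = {0..n}"

definition wheel_edges :: "nat \<Rightarrow> nat set set" where
  "wheel_edges n = cycle_edges n \<union> {{0, i} | i. i \<in> {1..n}}"

definition cycle_subgraph_count :: "nat \<Rightarrow> nat \<Rightarrow> nat" where
  "cycle_subgraph_count k n = card {(A, EA). A \<subseteq> {1..n} \<and> A \<noteq> {} \<and>
      EA \<subseteq> cycle_edges n \<and> (\<forall>e\<in>EA. e \<subseteq> A) \<and> card EA = k}"

end

theory Submission
  imports Defs
begin

text \<open>Edge sets of \<open>W\<^sub>n\<close> are pairs \<open>(K, S)\<close> of rim edges and spokes, and \<open>T(1, x)\<close>
  sums \<open>(x - 1)^(|K| + |S| - n)\<close> over the connected ones. Call a rim vertex reached if a spoke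
  leads to it along rim edges of \<open>K\<close> traversed forwards. The set \<open>B\<close> of reached vertices is
  characterised by rules local to each vertex; a set \<open>B\<close> obeying them exists exactly when
  \<open>(K, S)\<close> is connected and is then unique, except for the full rim without spokes, which
  admits \<open>B = {}\<close> and \<open>B = [n]\<close>. Weighting each spoke at an already reached vertex by
  \<open>x - 1\<close>, the sum over all \<open>(K, S, B)\<close> is therefore \<open>T(1, x) + 2\<close>. Summing instead over
  \<open>(K, S)\<close> first, vertex by vertex, leaves a factor \<open>1 + x\<close> for each edge of \<open>C\<^sub>n\<close> inside \<open>B\<close>,
  and \<open>\<Sum>\<^sub>B (1 + x)^e(B)\<close> counts the subgraphs of \<open>C\<^sub>n\<close> plus one for \<open>B = {}\<close>.\<close>

lemma sum_Pow_prod_bool: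
  fixes g :: "'b \<Rightarrow> bool \<Rightarrow> 'a::comm_semiring_1"
  assumes "finite I"
  shows "(\<Sum>K\<in>Pow I. \<Prod>i\<in>I. g i (i \<in> K)) = (\<Prod>i\<in>I. g i True + g i False)"
proof -
  have "(\<Prod>i\<in>I. g i (i \<in> K)) = (\<Prod>i\<in>K. g i True) * (\<Prod>i\<in>I - K. g i False)"
    if "K \<in> Pow I" for K
  proof -
    have "(\<Prod>i\<in>I. g i (i \<in> K)) = (\<Prod>i\<in>I. if i \<in> K then g i True else g i False)"
      by (rule prod.cong) auto
    also have "\<dots> = (\<Prod>i\<in>I \<inter> K. g i True) * (\<Prod>i\<in>I - K. g i False)"
      using prod.If_cases[OF assms, of "\<lambda>i. i \<in> K"] by (simp add: Diff_eq)
    finally show ?thesis using that by (simp add: Int_absorb1)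
  qed
  then show ?thesis
    by (simp add: prod_add[OF assms])
qed

lemma prod_if_eq_power:
  fixes y :: "'a::comm_monoid_mult"
  assumes "finite F"
  shows "(\<Prod>i\<in>F. if P i then y else 1) = y ^ card {i\<in>F. P i}"
  using prod.inter_filter[OF assms, of "\<lambda>_. y" P] by simp

lemma sum_Pow_power_card:
  fixes x :: "'a::comm_semiring_1"
  assumes "finite F"
  shows "(\<Sum>E\<in>Pow F. x ^ card E) = (1 + x) ^ card F"
  using prod_add[OF assms, of "\<lambda>_. x" "\<lambda>_. 1"] by (simp add: add.commute)

lemma sum_power_eq_sum_card:
  fixes x :: "'a::comm_semiring_1" and g :: "'b \<Rightarrow> nat"
  assumes P: "finite P" and bound: "\<And>p. p \<in> P \<Longrightarrow> g p \<le> m"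
  shows "(\<Sum>p\<in>P. x ^ g p) = (\<Sum>k\<le>m. of_nat (card {p\<in>P. g p = k}) * x ^ k)"
proof -
  have "g ` P \<subseteq> {..m}" using bound by auto
  from sum.group[OF P finite_atMost this, where h = "\<lambda>p. x ^ g p"] show ?thesis by simp
qed

lemma sym_edge_rel: "sym (edge_rel A)"
  by (auto simp: sym_def edge_rel_def insert_commute)

lemma num_components_eq_1_iff:
  assumes "r \<in> V"
  shows "num_components V A = 1 \<longleftrightarrow> (\<forall>v\<in>V. (r, v) \<in> (edge_rel A)\<^sup>*)"
proof -
  define cl where "cl v = (edge_rel A)\<^sup>* `` {v} \<inter> V" for v
  have nc: "num_components V A = card (cl ` V)" by (simp add: num_components_def cl_def)
  show ?thesis
  proof
    assume "num_components V A = 1"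
    then obtain c where c: "cl ` V = {c}" using nc by (metis card_1_singletonE)
    show "\<forall>v\<in>V. (r, v) \<in> (edge_rel A)\<^sup>*"
    proof
      fix v assume v: "v \<in> V"
      have "v \<in> cl v" using v by (simp add: cl_def)
      also have "cl v = cl r" using c v assms by blast
      finally show "(r, v) \<in> (edge_rel A)\<^sup>*" by (simp add: cl_def)
    qed
  next
    assume reach: "\<forall>v\<in>V. (r, v) \<in> (edge_rel A)\<^sup>*"
    have "cl v = cl r" if "v \<in> V" for v
    proof -
      have rv: "(r, v) \<in> (edge_rel A)\<^sup>*" using reach that by blast
      moreover have "(v, r) \<in> (edge_rel A)\<^sup>*" by (rule symD[OF sym_rtrancl[OF sym_edge_rel] rv])
      ultimately show ?thesis unfolding cl_def by (blast intro: rtrancl_trans)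
    qed
    then have "cl ` V = {cl r}" using assms by blast
    then show "num_components V A = 1" using nc by simp
  qed
qed

lemma num_components_pos: "finite V \<Longrightarrow> V \<noteq> {} \<Longrightarrow> 0 < num_components V A"
  unfolding num_components_def by (simp add: card_gt_0_iff)

lemma num_components_le_card: "finite V \<Longrightarrow> num_components V A \<le> card V"
  unfolding num_components_def by (rule card_image_le)

lemma rtrancl_edge_rel_closed:
  assumes "(r, v) \<in> (edge_rel A)\<^sup>*" "r \<in> X"
    and closed: "\<And>u w. {u, w} \<in> A \<Longrightarrow> u \<in> X \<Longrightarrow> w \<in> X"
  shows "v \<in> X"
  using assms(1,2)
proof (induction rule: rtrancl_induct)
  case (step y z)
  then show ?case using closed by (auto simp: edge_rel_def)
qed

definition cyc_pred :: "nat \<Rightarrow> nat \<Rightarrow> nat" where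
  "cyc_pred n i = (if i = 1 then n else i - 1)"

lemma cyc_pred_in: "i \<in> {1..n} \<Longrightarrow> cyc_pred n i \<in> {1..n}"
  by (auto simp: cyc_pred_def)

lemma inj_on_cyc_pred: "inj_on (cyc_pred n) {1..n}"
  by (auto simp: cyc_pred_def inj_on_def split: if_splits)

lemma bij_betw_cyc_pred: "bij_betw (cyc_pred n) {1..n} {1..n}"
proof -
  have "cyc_pred n ` {1..n} \<subseteq> {1..n}" using cyc_pred_in by auto
  moreover have "card (cyc_pred n ` {1..n}) = card {1..n}"
    using card_image[OF inj_on_cyc_pred] by simp
  ultimately show ?thesis
    using inj_on_cyc_pred by (simp add: bij_betw_def card_subset_eq)
qed

lemma cyc_pred_induct:
  assumes j: "j \<in> {1..n}" and base: "P j"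
    and step: "\<And>i. i \<in> {1..n} \<Longrightarrow> P (cyc_pred n i) \<Longrightarrow> P i"
    and i: "i \<in> {1..n}"
  shows "P i"
proof -
  have step_Suc: "P (Suc m)" if "1 \<le> m" "Suc m \<le> n" "P m" for m
    using step[of "Suc m"] that by (simp add: cyc_pred_def)
  have up: "P k" if "j \<le> k" "k \<le> n" for k
    using that by (induction rule: dec_induct) (use base j step_Suc in auto)
  have "P 1"
    using step[of 1] up[of n] j by (simp add: cyc_pred_def)
  have down: "P k" if "1 \<le> k" "k \<le> j" for k
    using that by (induction rule: dec_induct) (use \<open>P 1\<close> j step_Suc in auto)
  show ?thesis
    using up down i j by (metis atLeastAtMost_iff nat_le_linear)
qed

lemma cyc_pred_closed_eq:
  assumes "Y \<subseteq> {1..n}" "y \<in> Y" "\<And>i. i \<in> {1..n} \<Longrightarrow> cyc_pred n i \<in> Y \<Longrightarrow> i \<in> Y"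
  shows "Y = {1..n}"
  using assms cyc_pred_induct[of y n "\<lambda>i. i \<in> Y"] by blast

definition rim_edge :: "nat \<Rightarrow> nat \<Rightarrow> nat set" where
  "rim_edge n i = {cyc_pred n i, i}"

lemma inj_on_rim_edge: "3 \<le> n \<Longrightarrow> inj_on (rim_edge n) {1..n}"
  unfolding inj_on_def rim_edge_def cyc_pred_def
  by (auto simp: doubleton_eq_iff split: if_splits)

lemma zero_notin_rim_edge: "i \<in> {1..n} \<Longrightarrow> 0 \<notin> rim_edge n i"
  by (auto simp: rim_edge_def cyc_pred_def)

lemma cycle_edges_eq_rim_edges: "1 \<le> n \<Longrightarrow> cycle_edges n = rim_edge n ` {1..n}"
proof (intro equalityI subsetI)
  fix e assume "e \<in> cycle_edges n" "1 \<le> n"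
  then consider i where "1 \<le> i" "i < n" "e = rim_edge n (i + 1)" | "e = rim_edge n 1"
    unfolding cycle_edges_def by (auto simp: rim_edge_def cyc_pred_def)
  then show "e \<in> rim_edge n ` {1..n}"
    by cases (use \<open>1 \<le> n\<close> in auto)
next
  fix e assume "e \<in> rim_edge n ` {1..n}"
  then obtain i where i: "i \<in> {1..n}" "e = rim_edge n i" by auto
  show "e \<in> cycle_edges n"
  proof (cases "i = 1")
    case True
    then show ?thesis using i by (auto simp: rim_edge_def cyc_pred_def cycle_edges_def)
  next
    case False
    then have "e = {i - 1, i - 1 + 1}" "1 \<le> i - 1" "i - 1 < n"
      using i by (auto simp: rim_edge_def cyc_pred_def)
    then show ?thesis unfolding cycle_edges_def by blast
  qed
qed

definition spoke :: "nat \<Rightarrow> nat set" where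
  "spoke i = {0, i}"

definition wheel_subgraph :: "nat \<Rightarrow> nat set \<Rightarrow> nat set \<Rightarrow> nat set set" where
  "wheel_subgraph n K S = rim_edge n ` K \<union> spoke ` S"

definition wheel_connected :: "nat \<Rightarrow> nat set \<Rightarrow> nat set \<Rightarrow> bool" where
  "wheel_connected n K S \<longleftrightarrow>
     (\<forall>Y. Y \<subseteq> {1..n} \<and> Y \<inter> S = {} \<and> (\<forall>i\<in>K. cyc_pred n i \<in> Y \<longleftrightarrow> i \<in> Y) \<longrightarrow> Y = {})"

lemma inj_spoke: "inj spoke"
  by (auto simp: inj_on_def spoke_def doubleton_eq_iff)

lemma wheel_edges_eq_wheel_subgraph: "1 \<le> n \<Longrightarrow> wheel_edges n = wheel_subgraph n {1..n} {1..n}"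
  by (auto simp: wheel_edges_def wheel_subgraph_def spoke_def cycle_edges_eq_rim_edges)

lemma wheel_subgraph_parts:
  assumes "K \<subseteq> {1..n}"
  shows "{e\<in>wheel_subgraph n K S. 0 \<in> e} = spoke ` S"
    and "{e\<in>wheel_subgraph n K S. 0 \<notin> e} = rim_edge n ` K"
  using zero_notin_rim_edge assms by (auto simp: wheel_subgraph_def spoke_def)

lemma wheel_subgraph_eq_iff:
  assumes n: "3 \<le> n" and K: "K \<subseteq> {1..n}" "K' \<subseteq> {1..n}"
  shows "wheel_subgraph n K S = wheel_subgraph n K' S' \<longleftrightarrow> K = K' \<and> S = S'"
proof
  assume eq: "wheel_subgraph n K S = wheel_subgraph n K' S'"
  have "rim_edge n ` K = rim_edge n ` K'"
    using wheel_subgraph_parts(2)[OF K(1), of S] wheel_subgraph_parts(2)[OF K(2), of S']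
    unfolding eq by simp
  then have "K = K'"
    by (rule inj_on_image_eq_iff[OF inj_on_rim_edge[OF n] K, THEN iffD1])
  have "spoke ` S = spoke ` S'"
    using wheel_subgraph_parts(1)[OF K(1), of S] wheel_subgraph_parts(1)[OF K(2), of S']
    unfolding eq by simp
  then have "S = S'"
    by (rule inj_image_eq_iff[OF inj_spoke, THEN iffD1])
  with \<open>K = K'\<close> show "K = K' \<and> S = S'" ..
qed simp

lemma bij_betw_wheel_subgraph:
  assumes n: "3 \<le> n"
  shows "bij_betw (\<lambda>(K, S). wheel_subgraph n K S) (Pow {1..n} \<times> Pow {1..n}) (Pow (wheel_edges n))"
proof (rule bij_betw_imageI)
  show "inj_on (\<lambda>(K, S). wheel_subgraph n K S) (Pow {1..n} \<times> Pow {1..n})"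
    using wheel_subgraph_eq_iff[OF n] by (auto simp: inj_on_def)
  show "(\<lambda>(K, S). wheel_subgraph n K S) ` (Pow {1..n} \<times> Pow {1..n}) = Pow (wheel_edges n)"
  proof (intro equalityI subsetI)
    fix A assume "A \<in> (\<lambda>(K, S). wheel_subgraph n K S) ` (Pow {1..n} \<times> Pow {1..n})"
    then show "A \<in> Pow (wheel_edges n)"
      using n by (auto simp: wheel_edges_eq_wheel_subgraph wheel_subgraph_def)
  next
    fix A assume "A \<in> Pow (wheel_edges n)"
    then have "A = wheel_subgraph n {i\<in>{1..n}. rim_edge n i \<in> A} {i\<in>{1..n}. spoke i \<in> A}"
      using n by (auto simp: wheel_edges_eq_wheel_subgraph wheel_subgraph_def)
    then show "A \<in> (\<lambda>(K, S). wheel_subgraph n K S) ` (Pow {1..n} \<times> Pow {1..n})"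
      by (intro image_eqI[where x = "({i\<in>{1..n}. rim_edge n i \<in> A}, {i\<in>{1..n}. spoke i \<in> A})"]) auto
  qed
qed

lemma card_wheel_subgraph:
  assumes n: "3 \<le> n" and K: "K \<subseteq> {1..n}" and S: "S \<subseteq> {1..n}"
  shows "card (wheel_subgraph n K S) = card K + card S"
proof -
  have "rim_edge n i \<noteq> spoke j" if "i \<in> K" for i j
    using zero_notin_rim_edge[of i n] that K by (auto simp: spoke_def)
  then have "rim_edge n ` K \<inter> spoke ` S = {}" by blast
  then have "card (wheel_subgraph n K S) = card (rim_edge n ` K) + card (spoke ` S)"
    unfolding wheel_subgraph_def using K S by (simp add: card_Un_disjoint finite_subset)
  then show ?thesis
    using inj_on_subset[OF inj_on_rim_edge[OF n] K] inj_spoke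
    by (simp add: card_image inj_on_subset)
qed

lemma connected_imp_wheel_connected:
  assumes K: "K \<subseteq> {1..n}" and S: "S \<subseteq> {1..n}"
    and reach: "\<forall>v\<in>{0..n}. (0, v) \<in> (edge_rel (wheel_subgraph n K S))\<^sup>*"
  shows "wheel_connected n K S"
  unfolding wheel_connected_def
proof (intro allI impI)
  fix Y assume Y: "Y \<subseteq> {1..n} \<and> Y \<inter> S = {} \<and> (\<forall>i\<in>K. cyc_pred n i \<in> Y \<longleftrightarrow> i \<in> Y)"
  have closed: "w \<in> {0..n} - Y" if "{u, w} \<in> wheel_subgraph n K S" "u \<in> {0..n} - Y" for u w
  proof -
    have "(\<exists>i\<in>K. {u, w} = {cyc_pred n i, i}) \<or> (\<exists>i\<in>S. {u, w} = {0, i})"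
      using that(1) unfolding wheel_subgraph_def rim_edge_def spoke_def by auto
    then show ?thesis
      using that(2) Y K S cyc_pred_in[of _ n] by (auto simp: doubleton_eq_iff)
  qed
  have "v \<in> {0..n} - Y" if "v \<in> {0..n}" for v
    by (rule rtrancl_edge_rel_closed[of 0, OF _ _ closed]) (use reach that Y in auto)
  then show "Y = {}" using Y by auto
qed

lemma wheel_connected_imp_connected:
  assumes K: "K \<subseteq> {1..n}" and conn: "wheel_connected n K S"
  shows "\<forall>v\<in>{0..n}. (0, v) \<in> (edge_rel (wheel_subgraph n K S))\<^sup>*"
proof -
  let ?R = "edge_rel (wheel_subgraph n K S)"
  define Z where "Z = {v. (0, v) \<in> ?R\<^sup>*}"
  have along_edge: "u \<in> Z \<longleftrightarrow> w \<in> Z" if "{u, w} \<in> wheel_subgraph n K S" for u w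
  proof -
    have "(u, w) \<in> ?R" "(w, u) \<in> ?R"
      using that by (auto simp: edge_rel_def insert_commute)
    then show ?thesis
      unfolding Z_def mem_Collect_eq by (meson rtrancl_into_rtrancl)
  qed
  have "0 \<in> Z" by (simp add: Z_def)
  have "S \<subseteq> Z"
  proof
    fix i assume "i \<in> S"
    then have "{0, i} \<in> wheel_subgraph n K S" by (simp add: wheel_subgraph_def spoke_def)
    then show "i \<in> Z" using along_edge \<open>0 \<in> Z\<close> by blast
  qed
  moreover have "cyc_pred n i \<in> {1..n} - Z \<longleftrightarrow> i \<in> {1..n} - Z" if "i \<in> K" for i
  proof -
    have "{cyc_pred n i, i} \<in> wheel_subgraph n K S"
      using that by (simp add: wheel_subgraph_def rim_edge_def)
    then show ?thesis
      using along_edge[of "cyc_pred n i" i] that K cyc_pred_in[of i n] by auto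
  qed
  ultimately have "{1..n} - Z = {}"
    using conn[unfolded wheel_connected_def, rule_format, of "{1..n} - Z"] by auto
  then have "v \<in> Z" if "v \<in> {0..n}" for v
    using that \<open>0 \<in> Z\<close> by (cases "v = 0") auto
  then show ?thesis by (simp add: Z_def)
qed

lemma num_components_wheel_subgraph_eq_1_iff:
  assumes "K \<subseteq> {1..n}" "S \<subseteq> {1..n}"
  shows "num_components {0..n} (wheel_subgraph n K S) = 1 \<longleftrightarrow> wheel_connected n K S"
  using num_components_eq_1_iff[of 0 "{0..n}"] assms
    connected_imp_wheel_connected wheel_connected_imp_connected by auto

lemma wheel_connected_spokes: "wheel_connected n K {1..n}"
  unfolding wheel_connected_def by auto

lemma tutte_wheel_at_1:
  fixes x :: "'a::comm_ring_1"
  assumes n: "3 \<le> n"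
  shows "tutte {0..n} (wheel_edges n) 1 x
    = (\<Sum>K\<in>Pow {1..n}. \<Sum>S\<in>Pow {1..n}.
         if wheel_connected n K S then (x - 1) ^ (card K + card S - n) else 0)"
proof -
  let ?r = "graph_rank {0..n}"
  have rank_eq: "?r (wheel_subgraph n K S) = n \<longleftrightarrow> wheel_connected n K S"
    if "K \<subseteq> {1..n}" "S \<subseteq> {1..n}" for K S
    using num_components_wheel_subgraph_eq_1_iff[where n = n and K = K and S = S] that n
      num_components_pos[of "{0..n}" "wheel_subgraph n K S"]
      num_components_le_card[of "{0..n}" "wheel_subgraph n K S"]
    by (auto simp: graph_rank_def)
  have "?r (wheel_edges n) = n"
    using rank_eq[of "{1..n}" "{1..n}"] wheel_connected_spokes n
    by (simp add: wheel_edges_eq_wheel_subgraph)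
  then have "tutte {0..n} (wheel_edges n) 1 x
     = (\<Sum>K\<in>Pow {1..n}. \<Sum>S\<in>Pow {1..n}. 0 ^ (n - ?r (wheel_subgraph n K S))
          * (x - 1) ^ (card (wheel_subgraph n K S) - ?r (wheel_subgraph n K S)))"
    unfolding tutte_def
    by (subst sum.reindex_bij_betw[OF bij_betw_wheel_subgraph[OF n], symmetric])
      (simp add: sum.cartesian_product case_prod_unfold)
  also have "\<dots> = (\<Sum>K\<in>Pow {1..n}. \<Sum>S\<in>Pow {1..n}.
         if wheel_connected n K S then (x - 1) ^ (card K + card S - n) else 0)"
  proof (intro sum.cong refl)
    fix K S assume "K \<in> Pow {1..n}" "S \<in> Pow {1..n}"
    then have KS: "K \<subseteq> {1..n}" "S \<subseteq> {1..n}" by auto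
    have "?r (wheel_subgraph n K S) \<le> n"
      using num_components_pos[of "{0..n}" "wheel_subgraph n K S"] by (simp add: graph_rank_def)
    then show "0 ^ (n - ?r (wheel_subgraph n K S))
          * (x - 1) ^ (card (wheel_subgraph n K S) - ?r (wheel_subgraph n K S))
        = (if wheel_connected n K S then (x - 1) ^ (card K + card S - n) else 0)"
      using rank_eq[OF KS] card_wheel_subgraph[OF n KS] by (auto simp: zero_power)
  qed
  finally show ?thesis .
qed

text \<open>The arguments of \<open>label_rule\<close> say whether \<open>i - 1 \<in> B\<close>, \<open>i \<in> K\<close>, \<open>i \<in> S\<close>, \<open>i \<in> B\<close>. Besides
  propagation along rim edges, it demands that a vertex with no rim edge to its successor
  is reached, i.e. that every maximal rim arc carries a spoke.\<close>

definition label_rule :: "bool \<Rightarrow> bool \<Rightarrow> bool \<Rightarrow> bool \<Rightarrow> bool" where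
  "label_rule bp c s b \<longleftrightarrow> (c \<or> bp) \<and> (b \<longleftrightarrow> s \<or> c \<and> bp)"

definition spoke_labelling :: "nat \<Rightarrow> nat set \<Rightarrow> nat set \<Rightarrow> nat set \<Rightarrow> bool" where
  "spoke_labelling n K S B \<longleftrightarrow>
     (\<forall>i\<in>{1..n}. label_rule (cyc_pred n i \<in> B) (i \<in> K) (i \<in> S) (i \<in> B))"

definition rim_step :: "nat \<Rightarrow> nat set \<Rightarrow> nat rel" where
  "rim_step n K = {(cyc_pred n i, i) | i. i \<in> K}"

definition forward_reach :: "nat \<Rightarrow> nat set \<Rightarrow> nat set \<Rightarrow> nat set" where
  "forward_reach n K S = {i\<in>{1..n}. \<exists>j\<in>S. (j, i) \<in> (rim_step n K)\<^sup>*}"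

lemma forward_reach_iff:
  assumes i: "i \<in> {1..n}"
  shows "i \<in> forward_reach n K S \<longleftrightarrow> i \<in> S \<or> i \<in> K \<and> cyc_pred n i \<in> forward_reach n K S"
proof
  assume "i \<in> forward_reach n K S"
  then obtain j where j: "j \<in> S" "(j, i) \<in> (rim_step n K)\<^sup>*" by (auto simp: forward_reach_def)
  from j(2) show "i \<in> S \<or> i \<in> K \<and> cyc_pred n i \<in> forward_reach n K S"
  proof (cases rule: rtranclE)
    case (step z)
    then have "i \<in> K" "z = cyc_pred n i" by (auto simp: rim_step_def)
    then show ?thesis
      using step j(1) cyc_pred_in[OF i] by (auto simp: forward_reach_def)
  qed (use j in simp)
next
  assume "i \<in> S \<or> i \<in> K \<and> cyc_pred n i \<in> forward_reach n K S"
  then show "i \<in> forward_reach n K S"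
  proof
    assume "i \<in> K \<and> cyc_pred n i \<in> forward_reach n K S"
    then obtain j where
      "j \<in> S" "(j, cyc_pred n i) \<in> (rim_step n K)\<^sup>*" "(cyc_pred n i, i) \<in> rim_step n K"
      by (auto simp: forward_reach_def rim_step_def)
    then show ?thesis using i by (auto simp: forward_reach_def intro: rtrancl_into_rtrancl)
  qed (use i in \<open>auto simp: forward_reach_def\<close>)
qed

lemma cyc_pred_in_forward_reach:
  assumes conn: "wheel_connected n K S" and K: "K \<subseteq> {1..n}"
    and i: "i \<in> {1..n}" "i \<notin> K"
  shows "cyc_pred n i \<in> forward_reach n K S"
proof (rule ccontr)
  assume unreached: "cyc_pred n i \<notin> forward_reach n K S"
  define Y where "Y = {v\<in>{1..n}. (v, cyc_pred n i) \<in> (rim_step n K)\<^sup>*}"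
  have "Y \<inter> S = {}"
    using unreached cyc_pred_in[OF i(1)] by (auto simp: Y_def forward_reach_def)
  moreover have "cyc_pred n k \<in> Y \<longleftrightarrow> k \<in> Y" if k: "k \<in> K" for k
  proof
    assume "cyc_pred n k \<in> Y"
    then have "(cyc_pred n k, cyc_pred n i) \<in> (rim_step n K)\<^sup>*" by (simp add: Y_def)
    then show "k \<in> Y"
    proof (cases rule: converse_rtranclE)
      case base
      then have "k = i" using inj_onD[OF inj_on_cyc_pred] k K i(1) by blast
      then show ?thesis using k i(2) by simp
    next
      case (step z)
      then have "z \<in> K" "cyc_pred n k = cyc_pred n z" by (auto simp: rim_step_def)
      then have "z = k" using inj_onD[OF inj_on_cyc_pred] k K by blast
      then show ?thesis using step k K by (auto simp: Y_def)
    qed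
  next
    assume "k \<in> Y"
    moreover have "(cyc_pred n k, k) \<in> rim_step n K" using k by (auto simp: rim_step_def)
    ultimately show "cyc_pred n k \<in> Y"
      using k K cyc_pred_in[of k n] by (auto simp: Y_def intro: converse_rtrancl_into_rtrancl)
  qed
  moreover have "Y \<subseteq> {1..n}" by (auto simp: Y_def)
  ultimately have "Y = {}"
    using conn[unfolded wheel_connected_def, rule_format, of Y] by blast
  moreover have "cyc_pred n i \<in> Y" using cyc_pred_in[OF i(1)] by (simp add: Y_def)
  ultimately show False by simp
qed

lemma spoke_labelling_forward_reach:
  assumes "wheel_connected n K S" "K \<subseteq> {1..n}"
  shows "spoke_labelling n K S (forward_reach n K S)"
  using forward_reach_iff cyc_pred_in_forward_reach[OF assms]
  unfolding spoke_labelling_def label_rule_def by blast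

lemma spoke_labelling_unique:
  assumes K: "K \<subseteq> {1..n}" and S: "S \<subseteq> {1..n}" and nontrivial: "K \<noteq> {1..n} \<or> S \<noteq> {}"
    and B: "B \<subseteq> {1..n}" "spoke_labelling n K S B"
    and B': "B' \<subseteq> {1..n}" "spoke_labelling n K S B'"
  shows "B = B'"
proof -
  have rule: "label_rule (cyc_pred n i \<in> B) (i \<in> K) (i \<in> S) (i \<in> B)"
    "label_rule (cyc_pred n i \<in> B') (i \<in> K) (i \<in> S) (i \<in> B')" if "i \<in> {1..n}" for i
    using B(2) B'(2) that by (auto simp: spoke_labelling_def)
  obtain j where j: "j \<in> {1..n}" "j \<in> B \<longleftrightarrow> j \<in> B'"
  proof (cases "K = {1..n}")
    case True
    then obtain j where "j \<in> S" using nontrivial by blast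
    then show ?thesis using that rule S by (auto simp: label_rule_def)
  next
    case False
    then obtain j where "j \<in> {1..n}" "j \<notin> K" using K by blast
    then show ?thesis using that rule[of j] by (auto simp: label_rule_def)
  qed
  have "i \<in> B \<longleftrightarrow> i \<in> B'" if "i \<in> {1..n}" for i
    by (rule cyc_pred_induct[where P = "\<lambda>i. i \<in> B \<longleftrightarrow> i \<in> B'", OF j _ that])
      (use rule in \<open>auto simp: label_rule_def\<close>)
  then show ?thesis using B(1) B'(1) by blast
qed

lemma spoke_labelling_imp_wheel_connected:
  assumes K: "K \<subseteq> {1..n}" and S: "S \<subseteq> {1..n}" and nontrivial: "K \<noteq> {1..n} \<or> S \<noteq> {}"
    and B: "spoke_labelling n K S B"
  shows "wheel_connected n K S"
  unfolding wheel_connected_def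
proof (intro allI impI)
  fix Y assume Y: "Y \<subseteq> {1..n} \<and> Y \<inter> S = {} \<and> (\<forall>i\<in>K. cyc_pred n i \<in> Y \<longleftrightarrow> i \<in> Y)"
  have rule: "label_rule (cyc_pred n i \<in> B) (i \<in> K) (i \<in> S) (i \<in> B)" if "i \<in> {1..n}" for i
    using B that by (auto simp: spoke_labelling_def)
  show "Y = {}"
  proof (rule ccontr)
    assume "Y \<noteq> {}"
    have "\<exists>g\<in>{1..n}. g \<notin> K \<and> cyc_pred n g \<in> Y"
    proof (rule ccontr)
      assume "\<not> ?thesis"
      then have gapless: "\<And>i. i \<in> {1..n} \<Longrightarrow> cyc_pred n i \<in> Y \<Longrightarrow> i \<in> K" by blast
      obtain y where "y \<in> Y" using \<open>Y \<noteq> {}\<close> by blast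
      have "Y = {1..n}"
      proof (rule cyc_pred_closed_eq[OF _ \<open>y \<in> Y\<close>])
        show "Y \<subseteq> {1..n}" using Y by blast
        show "i \<in> Y" if "i \<in> {1..n}" "cyc_pred n i \<in> Y" for i
          using gapless[OF that] that(2) Y by blast
      qed
      then have "K = {1..n}" "S = {}"
        using gapless cyc_pred_in[of _ n] K S Y by auto
      then show False using nontrivial by simp
    qed
    then obtain g where g: "g \<in> {1..n}" "g \<notin> K" "cyc_pred n g \<in> Y" by blast
    have "i \<in> Y \<longrightarrow> i \<notin> B" if "i \<in> {1..n}" for i
    proof (rule cyc_pred_induct[where P = "\<lambda>i. i \<in> Y \<longrightarrow> i \<notin> B", OF g(1) _ _ that])
      show "g \<in> Y \<longrightarrow> g \<notin> B" using Y rule[OF g(1)] g(2) by (auto simp: label_rule_def)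
    next
      fix i assume "i \<in> {1..n}" "cyc_pred n i \<in> Y \<longrightarrow> cyc_pred n i \<notin> B"
      then show "i \<in> Y \<longrightarrow> i \<notin> B" using Y rule[of i] by (auto simp: label_rule_def)
    qed
    moreover have "cyc_pred n g \<in> B" using rule[OF g(1)] g(2) by (simp add: label_rule_def)
    ultimately show False using g(3) cyc_pred_in[OF g(1)] by blast
  qed
qed

lemma spoke_labelling_rim_iff:
  assumes "B \<subseteq> {1..n}"
  shows "spoke_labelling n {1..n} {} B \<longleftrightarrow> B = {} \<or> B = {1..n}"
proof -
  have "spoke_labelling n {1..n} {} B \<longleftrightarrow> (\<forall>i\<in>{1..n}. i \<in> B \<longleftrightarrow> cyc_pred n i \<in> B)"
    by (auto simp: spoke_labelling_def label_rule_def)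
  then show ?thesis
    using assms cyc_pred_closed_eq[of B n] cyc_pred_in[of _ n] by blast
qed

lemma not_wheel_connected_rim:
  assumes "1 \<le> n"
  shows "\<not> wheel_connected n {1..n} {}"
proof
  assume "wheel_connected n {1..n} {}"
  then have "{1..n} = ({} :: nat set)"
    unfolding wheel_connected_def using cyc_pred_in[of _ n] by blast
  then show False using assms by simp
qed

lemma spoke_labellings_eq:
  assumes K: "K \<subseteq> {1..n}" and S: "S \<subseteq> {1..n}"
  shows "{B\<in>Pow {1..n}. spoke_labelling n K S B} =
    (if K = {1..n} \<and> S = {} then {{}, {1..n}}
     else if wheel_connected n K S then {forward_reach n K S} else {})"
proof (cases "K = {1..n} \<and> S = {}")
  case True
  then show ?thesis using spoke_labelling_rim_iff[of _ n] by auto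
next
  case False
  then have nontrivial: "K \<noteq> {1..n} \<or> S \<noteq> {}" by blast
  show ?thesis
  proof (cases "wheel_connected n K S")
    case True
    have "forward_reach n K S \<in> {B\<in>Pow {1..n}. spoke_labelling n K S B}"
      using spoke_labelling_forward_reach[OF True K] by (auto simp: forward_reach_def)
    then have "{B\<in>Pow {1..n}. spoke_labelling n K S B} = {forward_reach n K S}"
      using spoke_labelling_unique[OF K S nontrivial] by blast
    then show ?thesis by (simp only: if_not_P[OF False] if_P[OF True])
  next
    case disconnected: False
    then have "{B\<in>Pow {1..n}. spoke_labelling n K S B} = {}"
      using spoke_labelling_imp_wheel_connected[OF K S nontrivial] by blast
    then show ?thesis by (simp only: if_not_P[OF False] if_not_P[OF disconnected])
  qed
qed

definition redundant_spokes :: "nat \<Rightarrow> nat set \<Rightarrow> nat set \<Rightarrow> nat set \<Rightarrow> nat" where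
  "redundant_spokes n K S B = card {i\<in>{1..n}. i \<in> K \<and> i \<in> S \<and> cyc_pred n i \<in> B}"

lemma redundant_spokes_add:
  assumes K: "K \<subseteq> {1..n}" and S: "S \<subseteq> {1..n}" and B: "spoke_labelling n K S B"
  shows "redundant_spokes n K S B + n = card K + card S"
proof -
  let ?I = "{1..n}"
  have "(\<Sum>i\<in>?I. of_bool (i \<in> K \<and> i \<in> S \<and> cyc_pred n i \<in> B)) + (\<Sum>i\<in>?I. 1)
        + (\<Sum>i\<in>?I. of_bool (i \<in> B))
      = (\<Sum>i\<in>?I. of_bool (i \<in> K)) + (\<Sum>i\<in>?I. of_bool (i \<in> S))
        + (\<Sum>i\<in>?I. of_bool (cyc_pred n i \<in> B) :: nat)"
    unfolding sum.distrib[symmetric]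
    using B by (intro sum.cong refl) (auto simp: spoke_labelling_def label_rule_def)
  moreover have "(\<Sum>i\<in>?I. of_bool (cyc_pred n i \<in> B)) = (\<Sum>i\<in>?I. of_bool (i \<in> B) :: nat)"
    using sum.reindex_bij_betw[OF bij_betw_cyc_pred, of "\<lambda>i. of_bool (i \<in> B)" n]
    by (simp del: sum_of_bool_eq)
  moreover have "?I \<inter> {i. i \<in> K} = K" "?I \<inter> {i. i \<in> S} = S" using K S by auto
  ultimately show ?thesis
    by (simp add: redundant_spokes_def Int_def)
qed

lemma sum_spoke_labellings:
  fixes y :: "'a::comm_semiring_1"
  assumes n: "1 \<le> n" and K: "K \<subseteq> {1..n}" and S: "S \<subseteq> {1..n}"
  shows "(\<Sum>B\<in>Pow {1..n}. if spoke_labelling n K S B then y ^ redundant_spokes n K S B else 0)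
       = (if wheel_connected n K S then y ^ (card K + card S - n) else 0)
         + (if K = {1..n} \<and> S = {} then 2 else 0)"
proof -
  have "(\<Sum>B\<in>Pow {1..n}. if spoke_labelling n K S B then y ^ redundant_spokes n K S B else 0)
      = (\<Sum>B\<in>{B\<in>Pow {1..n}. spoke_labelling n K S B}. y ^ redundant_spokes n K S B)"
    by (rule sum.inter_filter[symmetric]) simp
  also have "\<dots> = (if wheel_connected n K S then y ^ (card K + card S - n) else 0)
         + (if K = {1..n} \<and> S = {} then 2 else 0)"
  proof (cases "K = {1..n} \<and> S = {}")
    case True
    have "{B\<in>Pow {1..n}. spoke_labelling n K S B} = {{}, {1..n}}"
      by (simp only: spoke_labellings_eq[OF K S] if_P[OF True])
    moreover have "{1..n} \<noteq> {}" using n by simp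
    ultimately show ?thesis
      using True not_wheel_connected_rim[OF n] by (simp add: redundant_spokes_def)
  next
    case nontrivial: False
    show ?thesis
    proof (cases "wheel_connected n K S")
      case True
      have "{B\<in>Pow {1..n}. spoke_labelling n K S B} = {forward_reach n K S}"
        by (simp only: spoke_labellings_eq[OF K S] if_not_P[OF nontrivial] if_P[OF True])
      moreover have "redundant_spokes n K S (forward_reach n K S) = card K + card S - n"
        using redundant_spokes_add[OF K S spoke_labelling_forward_reach[OF True K]] by simp
      ultimately show ?thesis unfolding if_not_P[OF nontrivial] if_P[OF True] by simp
    next
      case False
      have "{B\<in>Pow {1..n}. spoke_labelling n K S B} = {}"
        by (simp only: spoke_labellings_eq[OF K S] if_not_P[OF nontrivial] if_not_P[OF False])
      then show ?thesis
        unfolding if_not_P[OF nontrivial] if_not_P[OF False] by (simp only: sum.empty) simp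
    qed
  qed
  finally show ?thesis .
qed

definition rim_weight :: "nat \<Rightarrow> 'a::comm_semiring_1 \<Rightarrow> nat set \<Rightarrow> 'a" where
  "rim_weight n x A = (\<Prod>i\<in>{1..n}. if cyc_pred n i \<in> A \<and> i \<in> A then 1 + x else 1)"

lemma cycle_subgraph_polynomial:
  fixes x :: "'a::comm_ring_1"
  assumes n: "3 \<le> n"
  shows "(\<Sum>k\<le>card (cycle_edges n). of_nat (cycle_subgraph_count k n) * x ^ k)
       = (\<Sum>A\<in>Pow {1..n}. rim_weight n x A) - 1"
proof -
  let ?I = "{1..n::nat}"
  let ?E = "cycle_edges n"
  have E: "?E = rim_edge n ` ?I" using n by (simp add: cycle_edges_eq_rim_edges)
  have finE: "finite ?E" using E by simp
  define inside where "inside A = {e\<in>?E. e \<subseteq> A}" for A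
  define P where "P = (SIGMA A:Pow ?I - {{}}. Pow (inside A))"
  have finP: "finite P" unfolding P_def inside_def using finE by (intro finite_SigmaI) auto
  have count: "cycle_subgraph_count k n = card {p\<in>P. card (snd p) = k}" for k
    unfolding cycle_subgraph_count_def P_def inside_def by (rule arg_cong[where f = card]) auto
  have "card (snd p) \<le> card ?E" if "p \<in> P" for p
  proof -
    have "snd p \<subseteq> ?E" using that by (auto simp: P_def inside_def)
    then show ?thesis using finE by (rule card_mono[rotated])
  qed
  from sum_power_eq_sum_card[OF finP this, where x = x]
  have "(\<Sum>k\<le>card ?E. of_nat (cycle_subgraph_count k n) * x ^ k) = (\<Sum>p\<in>P. x ^ card (snd p))"
    by (simp add: count)
  also have "\<dots> = (\<Sum>A\<in>Pow ?I - {{}}. \<Sum>F\<in>Pow (inside A). x ^ card F)"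
    unfolding P_def using finE by (subst sum.Sigma) (auto simp: inside_def case_prod_unfold)
  also have "\<dots> = (\<Sum>A\<in>Pow ?I - {{}}. rim_weight n x A)"
  proof (intro sum.cong refl)
    fix A
    have "inside A = rim_edge n ` {i\<in>?I. cyc_pred n i \<in> A \<and> i \<in> A}"
      unfolding inside_def E by (auto simp: rim_edge_def)
    moreover have "{i\<in>?I. cyc_pred n i \<in> A \<and> i \<in> A} \<subseteq> ?I" by blast
    ultimately have "card (inside A) = card {i\<in>?I. cyc_pred n i \<in> A \<and> i \<in> A}"
      using card_image inj_on_subset[OF inj_on_rim_edge[OF n]] by metis
    then show "(\<Sum>F\<in>Pow (inside A). x ^ card F) = rim_weight n x A"
      using finE by (simp add: sum_Pow_power_card inside_def rim_weight_def prod_if_eq_power)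
  qed
  also have "\<dots> = (\<Sum>A\<in>Pow ?I. rim_weight n x A) - 1"
  proof -
    have "(\<Sum>A\<in>Pow ?I. rim_weight n x A)
        = rim_weight n x {} + (\<Sum>A\<in>Pow ?I - {{}}. rim_weight n x A)"
      by (rule sum.remove) auto
    then show ?thesis by (simp add: rim_weight_def)
  qed
  finally show ?thesis .
qed

definition local_weight :: "'a::comm_semiring_1 \<Rightarrow> bool \<Rightarrow> bool \<Rightarrow> bool \<Rightarrow> bool \<Rightarrow> 'a" where
  "local_weight y bp c s b = (if label_rule bp c s b then if c \<and> s \<and> bp then y else 1 else 0)"

lemma local_weight_sum:
  fixes x :: "'a::comm_ring_1"
  shows "(local_weight (x - 1) bp True True b + local_weight (x - 1) bp True False b)
       + (local_weight (x - 1) bp False True b + local_weight (x - 1) bp False False b)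
       = (if bp \<and> b then 1 + x else 1)"
  by (cases bp; cases b) (simp_all add: local_weight_def label_rule_def)

lemma prod_local_weight:
  "(\<Prod>i\<in>{1..n}. local_weight y (cyc_pred n i \<in> B) (i \<in> K) (i \<in> S) (i \<in> B))
     = (if spoke_labelling n K S B then y ^ redundant_spokes n K S B else 0)"
proof (cases "spoke_labelling n K S B")
  case True
  then have "(\<Prod>i\<in>{1..n}. local_weight y (cyc_pred n i \<in> B) (i \<in> K) (i \<in> S) (i \<in> B))
      = (\<Prod>i\<in>{1..n}. if i \<in> K \<and> i \<in> S \<and> cyc_pred n i \<in> B then y else 1)"
    by (intro prod.cong refl) (auto simp: local_weight_def spoke_labelling_def)
  then show ?thesis
    using True by (simp add: prod_if_eq_power redundant_spokes_def)
next
  case False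
  then obtain i where "i \<in> {1..n}" "\<not> label_rule (cyc_pred n i \<in> B) (i \<in> K) (i \<in> S) (i \<in> B)"
    by (auto simp: spoke_labelling_def)
  then show ?thesis
    using False by (auto simp: local_weight_def intro!: prod_zero bexI[of _ i])
qed

lemma rim_weight_eq_sum_local_weights:
  fixes x :: "'a::comm_ring_1"
  shows "rim_weight n x B = (\<Sum>K\<in>Pow {1..n}. \<Sum>S\<in>Pow {1..n}.
           \<Prod>i\<in>{1..n}. local_weight (x - 1) (cyc_pred n i \<in> B) (i \<in> K) (i \<in> S) (i \<in> B))"
proof -
  let ?w = "\<lambda>i c s. local_weight (x - 1) (cyc_pred n i \<in> B) c s (i \<in> B)"
  have "(\<Sum>S\<in>Pow {1..n}. \<Prod>i\<in>{1..n}. ?w i (i \<in> K) (i \<in> S))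
      = (\<Prod>i\<in>{1..n}. ?w i (i \<in> K) True + ?w i (i \<in> K) False)" for K
    by (rule sum_Pow_prod_bool[where g = "\<lambda>i s. ?w i (i \<in> K) s"]) simp
  then have "(\<Sum>K\<in>Pow {1..n}. \<Sum>S\<in>Pow {1..n}. \<Prod>i\<in>{1..n}. ?w i (i \<in> K) (i \<in> S))
      = (\<Sum>K\<in>Pow {1..n}. \<Prod>i\<in>{1..n}. ?w i (i \<in> K) True + ?w i (i \<in> K) False)"
    by simp
  also have "\<dots> = (\<Prod>i\<in>{1..n}.
      (?w i True True + ?w i True False) + (?w i False True + ?w i False False))"
    by (rule sum_Pow_prod_bool[where g = "\<lambda>i c. ?w i c True + ?w i c False"]) simp
  also have "\<dots> = rim_weight n x B"
    unfolding rim_weight_def local_weight_sum ..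
  finally show ?thesis by simp
qed

lemma sum_rim_weight:
  fixes x :: "'a::comm_ring_1"
  assumes n: "3 \<le> n"
  shows "(\<Sum>B\<in>Pow {1..n}. rim_weight n x B) = tutte {0..n} (wheel_edges n) 1 x + 2"
proof -
  let ?I = "{1..n}"
  have "(\<Sum>B\<in>Pow ?I. rim_weight n x B)
      = (\<Sum>K\<in>Pow ?I. \<Sum>S\<in>Pow ?I. \<Sum>B\<in>Pow ?I.
           \<Prod>i\<in>?I. local_weight (x - 1) (cyc_pred n i \<in> B) (i \<in> K) (i \<in> S) (i \<in> B))"
    unfolding rim_weight_eq_sum_local_weights
    by (subst sum.swap) (rule sum.cong[OF refl], rule sum.swap)
  also have "\<dots> = (\<Sum>K\<in>Pow ?I. \<Sum>S\<in>Pow ?I.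
      (if wheel_connected n K S then (x - 1) ^ (card K + card S - n) else 0)
      + (if K = ?I \<and> S = {} then 2 else 0))"
  proof (intro sum.cong refl)
    fix K S assume "K \<in> Pow ?I" "S \<in> Pow ?I"
    with n show "(\<Sum>B\<in>Pow ?I.
           \<Prod>i\<in>?I. local_weight (x - 1) (cyc_pred n i \<in> B) (i \<in> K) (i \<in> S) (i \<in> B))
      = (if wheel_connected n K S then (x - 1) ^ (card K + card S - n) else 0)
        + (if K = ?I \<and> S = {} then 2 else 0)"
      unfolding prod_local_weight by (intro sum_spoke_labellings) auto
  qed
  also have "\<dots> = tutte {0..n} (wheel_edges n) 1 x
      + (\<Sum>K\<in>Pow ?I. \<Sum>S\<in>Pow ?I. if K = ?I \<and> S = {} then 2 else 0)"
    unfolding tutte_wheel_at_1[OF n] by (simp only: sum.distrib)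
  also have "(\<Sum>K\<in>Pow ?I. \<Sum>S\<in>Pow ?I. if K = ?I \<and> S = {} then 2 else 0)
      = (\<Sum>K\<in>Pow ?I. if K = ?I then \<Sum>S\<in>Pow ?I. if S = {} then 2 else 0 else (0::'a))"
    by (intro sum.cong refl) auto
  also have "\<dots> = 2" by simp
  finally show ?thesis .
qed

theorem mainTheorem8:
  fixes n :: nat and x :: "'a::comm_ring_1"
  assumes "n \<ge> 3"
  shows "1 + tutte (wheel_vertices n) (wheel_edges n) 1 x
           = (\<Sum>k\<le>card (cycle_edges n). of_nat (cycle_subgraph_count k n) * x ^ k)"
proof -
  have "(\<Sum>k\<le>card (cycle_edges n). of_nat (cycle_subgraph_count k n) * x ^ k)
      = (\<Sum>B\<in>Pow {1..n}. rim_weight n x B) - 1"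
    using assms by (rule cycle_subgraph_polynomial)
  also have "\<dots> = tutte (wheel_vertices n) (wheel_edges n) 1 x + 1"
    using sum_rim_weight[OF assms, of x] by (simp add: wheel_vertices_def)
  finally show ?thesis by (simp add: add.commute)
qed

end
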